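(* Consider the contact process with infection rate $\lambda<1$ on the star graph $S_k$ with root $\rho$ and $k$ leaves. Let $M$ be a positive integer with $\frac{32}{\lambda}\le M\le\frac{\lambda k}{100}$. Assume that at least $M$ leaves are infected at time $t$. Then the probability that at least $\frac{\lambda k}{100}$ leaves are infected at time $t+1$ is at least $1-3\exp(-\lambda M/128)$.
   Context: The star graph $S_k$ consists of a root $\rho$ joined by an edge to each of $k$ leaves. The contact process with infection rate $\lambda$: each infected vertex recovers at rate $1$ and infects each neighbour independently at rate $\lambda$, all events independent. *)

theory Defs
  imports Complex_Main
begin

definition star_vertices :: "nat \<Rightarrow> nat set" where
  "star_vertices k = {0..k}"

definition star_leaves :: "nat \<Rightarrow> nat set" where
  "star_leaves k = {1..k}"

definition star_adj :: "nat \<Rightarrow> nat \<Rightarrow> nat \<Rightarrow> bool" where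
  "star_adj k u v \<longleftrightarrow> u \<in> star_vertices k \<and> v \<in> star_vertices k \<and>
      ((u = 0 \<and> v \<noteq> 0) \<or> (u \<noteq> 0 \<and> v = 0))"

definition cp_states :: "nat \<Rightarrow> nat set set" where
  "cp_states k = Pow (star_vertices k)"

text \<open>Off-diagonal jump rates: an infected vertex recovers at rate 1; a healthy vertex
  becomes infected at rate lambda times its number of infected neighbours.\<close>

definition cp_rate :: "nat \<Rightarrow> real \<Rightarrow> nat set \<Rightarrow> nat set \<Rightarrow> real" where
  "cp_rate k lam x y =
     (if \<exists>v\<in>x. y = x - {v} then 1
      else if \<exists>v\<in>star_vertices k - x. y = insert v x
        then lam * real (card {u\<in>x. star_adj k u (THE v. y = insert v x \<and> v \<notin> x)})
      else 0)"

definition cp_gen :: "nat \<Rightarrow> real \<Rightarrow> nat set \<Rightarrow> nat set \<Rightarrow> real" where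
  "cp_gen k lam x y =
     (if x = y then - (\<Sum>z\<in>cp_states k - {x}. cp_rate k lam x z) else cp_rate k lam x y)"

fun cp_gen_pow :: "nat \<Rightarrow> real \<Rightarrow> nat \<Rightarrow> nat set \<Rightarrow> nat set \<Rightarrow> real" where
  "cp_gen_pow k lam 0 x y = (if x = y then 1 else 0)"
| "cp_gen_pow k lam (Suc n) x y = (\<Sum>z\<in>cp_states k. cp_gen k lam x z * cp_gen_pow k lam n z y)"

definition cp_trans :: "nat \<Rightarrow> real \<Rightarrow> real \<Rightarrow> nat set \<Rightarrow> nat set \<Rightarrow> real" where
  "cp_trans k lam t x y = (\<Sum>n. t ^ n / fact n * cp_gen_pow k lam n x y)"

end

theory Submission
  imports Defs "HOL-Analysis.Complex_Transcendental"
begin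

(* Dynkin's formula: if V(t, x) satisfies d/dt V + Q V <= 0 on [0, 1], where Q is the generator,
  then E_A V(1, X_1) <= V(0, A). So if V(1, -) >= 1 on the states with fewer than lam k / 100
  infected leaves, the probability of ending there is at most V(0, A). With r saying whether the
  root is infected and n the number of infected leaves, take
    V(t, r, n) = w_r exp(phi(t) - s(t) n) + K exp(-t) (1 - exp(t) / 4)^n,   w_True = 1, w_False = 2,
  with s(t) = s0 exp(3 t) and phi increasing linearly to phi(1) = s(1) lam k / 100. The first term
  is a supersolution when the root is infected (it reinfects leaves at rate lam (k - n)) or when
  many leaves are infected (they reinfect the root at rate lam n); in the remaining case, healthy
  root and n < M / 8, the decay of the second term absorbs its growth. At time 0 and n >= M the
  two terms are at most exp(- lam M / 128) and 2 exp(- lam M / 128). *)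

section \<open>Matrix exponentials of Q-matrices\<close>

fun mat_pow :: "'a set \<Rightarrow> ('a \<Rightarrow> 'a \<Rightarrow> real) \<Rightarrow> nat \<Rightarrow> 'a \<Rightarrow> 'a \<Rightarrow> real" where
  "mat_pow S Q 0 x y = (if x = y then 1 else 0)"
| "mat_pow S Q (Suc n) x y = (\<Sum>z\<in>S. Q x z * mat_pow S Q n z y)"

definition mat_exp :: "'a set \<Rightarrow> ('a \<Rightarrow> 'a \<Rightarrow> real) \<Rightarrow> real \<Rightarrow> 'a \<Rightarrow> 'a \<Rightarrow> real" where
  "mat_exp S Q t x y = (\<Sum>n. mat_pow S Q n x y / fact n * t ^ n)"

lemma mat_exp_0: "mat_exp S Q 0 x y = (if x = y then 1 else 0)"
  unfolding mat_exp_def by (subst powser_zero) simp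

lemma mat_pow_nonneg:
  assumes "\<And>x y. x \<in> S \<Longrightarrow> y \<in> S \<Longrightarrow> 0 \<le> Q x y" and "x \<in> S"
  shows "0 \<le> mat_pow S Q n x y"
  using assms(2) by (induction n arbitrary: x) (auto intro!: sum_nonneg mult_nonneg_nonneg assms(1))

lemma binomial_convolution_Suc:
  fixes T :: "nat \<Rightarrow> real"
  shows "(\<Sum>j\<le>n. of_nat (n choose j) * T (j + 1) * b ^ (n - j))
       + (\<Sum>j\<le>n. of_nat (n choose j) * T j * b ^ (n - j + 1))
       = (\<Sum>j\<le>n + 1. of_nat (n + 1 choose j) * T j * b ^ (n + 1 - j))"
proof -
  have "(\<Sum>j\<le>n. of_nat (n choose j) * T (j + 1) * b ^ (n - j))
       + (\<Sum>j\<le>n. of_nat (n choose j) * T j * b ^ (n - j + 1))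
     = (\<Sum>j\<le>n. of_nat (n choose j) * T j * b ^ (n + 1 - j))
       + (\<Sum>j=1..n+1. of_nat (n choose (j - 1)) * T j * b ^ (n + 1 - j))"
    by (simp add: atMost_atLeast0 sum.shift_bounds_cl_Suc_ivl Suc_diff_le field_simps
        del: sum.cl_ivl_Suc)
  also have "\<dots> = b ^ (n + 1) * T 0 + (\<Sum>j=1..n. of_nat (n choose j) * T j * b ^ (n + 1 - j))
      + (T (n + 1) + (\<Sum>j=1..n. of_nat (n choose (j - 1)) * T j * b ^ (n + 1 - j)))"
    using sum.nat_ivl_Suc'[of 1 n "\<lambda>j. of_nat (n choose (j - 1)) * T j * b ^ (n + 1 - j)"]
    by (simp add: sum.atLeast_Suc_atMost atMost_atLeast0)
  also have "\<dots> = T (n + 1) + b ^ (n + 1) * T 0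
      + (\<Sum>j=1..n. of_nat (n + 1 choose j) * T j * b ^ (n + 1 - j))"
    by (auto simp add: field_simps sum.distrib [symmetric] choose_reduce_nat)
  also have "\<dots> = (\<Sum>j\<le>n + 1. of_nat (n + 1 choose j) * T j * b ^ (n + 1 - j))"
    by (simp add: atMost_atLeast0 sum.atLeast_Suc_atMost field_simps)
  finally show ?thesis .
qed

context
  fixes S :: "'a set"
  assumes finite_S: "finite S"
begin

lemma mat_pow_Suc_right:
  assumes "x \<in> S" "y \<in> S"
  shows "mat_pow S Q (Suc n) x y = (\<Sum>z\<in>S. mat_pow S Q n x z * Q z y)"
  using assms(1)
proof (induction n arbitrary: x)
  case 0
  then show ?case
    using finite_S assms(2)
    by (simp add: if_distrib[where f="\<lambda>u. _ * u"] if_distrib[where f="\<lambda>u. u * _"] cong: if_cong)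
next
  case (Suc n)
  have "mat_pow S Q (Suc (Suc n)) x y = (\<Sum>z\<in>S. Q x z * mat_pow S Q (Suc n) z y)"
    by simp
  also have "\<dots> = (\<Sum>z\<in>S. Q x z * (\<Sum>w\<in>S. mat_pow S Q n z w * Q w y))"
    by (rule sum.cong) (use Suc.IH in auto)
  also have "\<dots> = (\<Sum>w\<in>S. (\<Sum>z\<in>S. Q x z * mat_pow S Q n z w) * Q w y)"
    by (simp add: sum_distrib_left sum_distrib_right mult.assoc) (rule sum.swap)
  finally show ?case by simp
qed

lemma mat_pow_abs_le:
  assumes "x \<in> S"
  shows "\<bar>mat_pow S Q n x y\<bar> \<le> (\<Sum>x\<in>S. \<Sum>z\<in>S. \<bar>Q x z\<bar>) ^ n"
  using assms
proof (induction n arbitrary: x)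
  case 0
  then show ?case by simp
next
  case (Suc n)
  define B where "B = (\<Sum>x\<in>S. \<Sum>z\<in>S. \<bar>Q x z\<bar>)"
  have "B \<ge> 0" unfolding B_def by (auto intro!: sum_nonneg)
  have row: "(\<Sum>z\<in>S. \<bar>Q x z\<bar>) \<le> B"
    unfolding B_def using Suc.prems finite_S
    by (intro member_le_sum[where f="\<lambda>x. \<Sum>z\<in>S. \<bar>Q x z\<bar>"]) (auto intro: sum_nonneg)
  have "\<bar>mat_pow S Q (Suc n) x y\<bar> \<le> (\<Sum>z\<in>S. \<bar>Q x z\<bar> * \<bar>mat_pow S Q n z y\<bar>)"
    by (simp add: abs_mult[symmetric] sum_abs)
  also have "\<dots> \<le> (\<Sum>z\<in>S. \<bar>Q x z\<bar> * B ^ n)"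
    by (rule sum_mono) (use Suc.IH in \<open>auto intro: mult_left_mono simp: B_def\<close>)
  also have "\<dots> \<le> B * B ^ n"
    using row \<open>B \<ge> 0\<close> by (simp add: sum_distrib_right[symmetric] mult_right_mono)
  finally show ?case by (simp add: B_def)
qed

lemma summable_mat_exp_series:
  assumes "x \<in> S"
  shows "summable (\<lambda>n. \<bar>mat_pow S Q n x y / fact n * t ^ n\<bar>)"
proof (rule summable_comparison_test'[where N=0])
  define B where "B = (\<Sum>x\<in>S. \<Sum>z\<in>S. \<bar>Q x z\<bar>)"
  show "summable (\<lambda>n. inverse (fact n) * (B * \<bar>t\<bar>) ^ n)"
    by (rule summable_exp)
  fix n :: nat
  have "\<bar>mat_pow S Q n x y\<bar> * \<bar>t\<bar> ^ n \<le> B ^ n * \<bar>t\<bar> ^ n"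
    using mat_pow_abs_le[OF assms] unfolding B_def by (intro mult_right_mono) auto
  then show "norm \<bar>mat_pow S Q n x y / fact n * t ^ n\<bar> \<le> inverse (fact n) * (B * \<bar>t\<bar>) ^ n"
    by (simp add: abs_mult power_abs power_mult_distrib divide_simps)
qed

lemma DERIV_mat_exp:
  assumes "x \<in> S" "y \<in> S"
  shows "((\<lambda>t. mat_exp S Q t x y) has_real_derivative
           (\<Sum>z\<in>S. mat_exp S Q t x z * Q z y)) (at t)"
proof -
  let ?c = "\<lambda>n. mat_pow S Q n x y / fact n"
  have summable: "summable (\<lambda>n. mat_pow S Q n x z / fact n * r ^ n)" for z r
    by (rule summable_rabs_cancel[OF summable_mat_exp_series[OF assms(1)]])
  have powser_deriv:
    "((\<lambda>t. \<Sum>n. ?c n * t ^ n) has_real_derivative (\<Sum>n. diffs ?c n * t ^ n)) (at t)"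
    by (rule termdiffs_strong_converges_everywhere) (rule summable)
  have "diffs ?c n * t ^ n = (\<Sum>z\<in>S. mat_pow S Q n x z / fact n * t ^ n * Q z y)" for n
  proof -
    have "diffs ?c n = mat_pow S Q (Suc n) x y / fact n"
      unfolding diffs_def by (simp del: mat_pow.simps of_nat_Suc)
    also have "\<dots> = (\<Sum>z\<in>S. mat_pow S Q n x z * Q z y) / fact n"
      by (simp only: mat_pow_Suc_right[OF assms])
    finally show ?thesis
      by (simp add: sum_distrib_left sum_distrib_right sum_divide_distrib mult_ac)
  qed
  then have "(\<Sum>n. diffs ?c n * t ^ n) = (\<Sum>z\<in>S. \<Sum>n. mat_pow S Q n x z / fact n * t ^ n * Q z y)"
    using suminf_sum[OF summable_mult2[OF summable]] by simp
  also have "\<dots> = (\<Sum>z\<in>S. mat_exp S Q t x z * Q z y)"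
    unfolding mat_exp_def using suminf_mult2[OF summable] by simp
  finally show ?thesis
    using powser_deriv unfolding mat_exp_def by simp
qed

lemma mat_pow_shift:
  assumes "x \<in> S"
  shows "mat_pow S (\<lambda>x y. Q x y + (if x = y then a else 0)) n x y
       = (\<Sum>j\<le>n. of_nat (n choose j) * mat_pow S Q j x y * a ^ (n - j))"
  using assms
proof (induction n arbitrary: x)
  case 0
  then show ?case by simp
next
  case (Suc n)
  let ?Qa = "\<lambda>x y. Q x y + (if x = y then a else 0)"
  have "mat_pow S ?Qa (Suc n) x y
      = (\<Sum>z\<in>S. Q x z * mat_pow S ?Qa n z y) + a * mat_pow S ?Qa n x y"
    using Suc.prems finite_S
    by (simp add: distrib_right sum.distrib if_distrib[where f="\<lambda>u. u * _"] cong: if_cong)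
  also have "(\<Sum>z\<in>S. Q x z * mat_pow S ?Qa n z y)
      = (\<Sum>j\<le>n. of_nat (n choose j) * mat_pow S Q (j + 1) x y * a ^ (n - j))"
    using Suc.IH
    by (simp add: sum_distrib_left sum_distrib_right mult_ac cong: sum.cong) (rule sum.swap)
  also have "a * mat_pow S ?Qa n x y
      = (\<Sum>j\<le>n. of_nat (n choose j) * mat_pow S Q j x y * a ^ (n - j + 1))"
    using Suc by (simp add: sum_distrib_left mult_ac)
  finally show ?case
    using binomial_convolution_Suc[of n "\<lambda>j. mat_pow S Q j x y" a] by simp
qed

lemma mat_exp_shift:
  assumes "x \<in> S"
  shows "mat_exp S (\<lambda>x y. Q x y + (if x = y then a else 0)) t x y = exp (a * t) * mat_exp S Q t x y"
proof -
  define u where "u i = mat_pow S Q i x y / fact i * t ^ i" for i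
  define v where "v m = inverse (fact m) * (a * t) ^ m" for m :: nat
  have su: "summable (\<lambda>i. norm (u i))"
    unfolding u_def real_norm_def by (rule summable_mat_exp_series[OF assms])
  have sv: "summable (\<lambda>m. norm (v m))"
    unfolding v_def using summable_exp[of "\<bar>a * t\<bar>"] by (simp add: abs_mult power_abs)
  have "u i * v (n - i)
      = of_nat (n choose i) * mat_pow S Q i x y * a ^ (n - i) / fact n * t ^ n" if "i \<le> n" for i n
  proof -
    have "t ^ i * t ^ (n - i) = t ^ n" using that by (simp flip: power_add)
    then show ?thesis
      unfolding u_def v_def binomial_fact[OF that] by (simp add: power_mult_distrib field_simps)
  qed
  then have "(\<Sum>i\<le>n. u i * v (n - i))
      = mat_pow S (\<lambda>x y. Q x y + (if x = y then a else 0)) n x y / fact n * t ^ n" for n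
    by (simp add: mat_pow_shift[OF assms] sum_distrib_right sum_divide_distrib del: mat_pow.simps)
  then have "mat_exp S (\<lambda>x y. Q x y + (if x = y then a else 0)) t x y = (\<Sum>i. u i) * (\<Sum>m. v m)"
    unfolding mat_exp_def Cauchy_product[OF su sv] by simp
  also have "(\<Sum>m. v m) = exp (a * t)"
    unfolding v_def using exp_converges[of "a * t"] by (simp add: sums_iff field_simps)
  finally show ?thesis
    unfolding mat_exp_def u_def by simp
qed

end

lemma sum_mult_eq_sum_increments:
  fixes q f :: "'a \<Rightarrow> real"
  assumes "finite S" "z \<in> S" "(\<Sum>y\<in>S. q y) = 0"
  shows "(\<Sum>y\<in>S. q y * f y) = (\<Sum>y\<in>S - {z}. q y * (f y - f z))"
proof -
  have "(\<Sum>y\<in>S. q y * (f y - f z)) = (\<Sum>y\<in>S. q y * f y) - (\<Sum>y\<in>S. q y) * f z"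
    by (simp add: right_diff_distrib sum_subtractf sum_distrib_right)
  then have "(\<Sum>y\<in>S. q y * f y) = (\<Sum>y\<in>S. q y * (f y - f z))"
    using assms(3) by simp
  also have "\<dots> = (\<Sum>y\<in>S - {z}. q y * (f y - f z))"
    using assms(1,2) by (simp add: sum.remove)
  finally show ?thesis .
qed

locale q_matrix =
  fixes S :: "'a set" and Q :: "'a \<Rightarrow> 'a \<Rightarrow> real"
  assumes finite_S: "finite S"
    and off_diagonal_nonneg: "\<And>x y. x \<in> S \<Longrightarrow> y \<in> S \<Longrightarrow> x \<noteq> y \<Longrightarrow> 0 \<le> Q x y"
    and row_sum_zero: "\<And>x. x \<in> S \<Longrightarrow> (\<Sum>y\<in>S. Q x y) = 0"
begin

lemma mat_pow_row_sum:
  assumes "x \<in> S"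
  shows "(\<Sum>y\<in>S. mat_pow S Q n x y) = (if n = 0 then 1 else 0)"
  using assms
proof (induction n arbitrary: x)
  case 0
  then show ?case using finite_S by simp
next
  case (Suc n)
  have "(\<Sum>y\<in>S. mat_pow S Q (Suc n) x y) = (\<Sum>z\<in>S. Q x z * (\<Sum>y\<in>S. mat_pow S Q n z y))"
    by (simp add: sum_distrib_left) (rule sum.swap)
  also have "\<dots> = (\<Sum>z\<in>S. Q x z * (if n = 0 then 1 else 0))"
    by (rule sum.cong) (use Suc.IH in auto)
  also have "\<dots> = 0"
    using row_sum_zero[OF Suc.prems] by (simp flip: sum_distrib_right)
  finally show ?case by simp
qed

lemma mat_exp_row_sum:
  assumes "x \<in> S"
  shows "(\<Sum>y\<in>S. mat_exp S Q t x y) = 1"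
proof -
  have "(\<Sum>y\<in>S. mat_exp S Q t x y) = (\<Sum>n. \<Sum>y\<in>S. mat_pow S Q n x y / fact n * t ^ n)"
    unfolding mat_exp_def
    by (rule suminf_sum[symmetric], rule summable_rabs_cancel)
       (rule summable_mat_exp_series[OF finite_S assms])
  also have "\<dots> = (\<Sum>n. if n = 0 then 1 else 0)"
    by (intro suminf_cong)
       (simp add: mat_pow_row_sum[OF assms] flip: sum_distrib_right sum_divide_distrib)
  also have "\<dots> = 1"
    using sums_single[of 0 "\<lambda>_. 1::real"] by (simp add: sums_iff)
  finally show ?thesis .
qed

text \<open>Uniformization: adding \<open>a\<close> to the diagonal, with \<open>a\<close> at least every \<open>\<bar>Q x x\<bar>\<close>, gives a
  matrix with nonnegative entries, and this only multiplies the exponential by \<open>exp (a * t)\<close>.\<close>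

lemma mat_exp_nonneg:
  assumes "0 \<le> t" "x \<in> S"
  shows "0 \<le> mat_exp S Q t x y"
proof -
  define a where "a = (\<Sum>x\<in>S. \<bar>Q x x\<bar>)"
  let ?Qa = "\<lambda>x y. Q x y + (if x = y then a else 0)"
  have diagonal: "\<bar>Q x x\<bar> \<le> a" if "x \<in> S" for x
    unfolding a_def using finite_S that by (intro member_le_sum) auto
  have "0 \<le> ?Qa x y" if "x \<in> S" "y \<in> S" for x y
    using off_diagonal_nonneg[OF that] diagonal[OF that(1)]
    by (cases "x = y") (auto simp: abs_le_iff)
  then have "0 \<le> mat_pow S ?Qa n x y" for n
    using assms(2) by (rule mat_pow_nonneg)
  then have "0 \<le> mat_exp S ?Qa t x y"
    unfolding mat_exp_def using assms(1)
    by (intro suminf_nonneg summable_rabs_cancel[OF summable_mat_exp_series[OF finite_S assms(2)]])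
       simp
  then show ?thesis
    unfolding mat_exp_shift[OF finite_S assms(2)] by (simp add: zero_le_mult_iff)
qed

lemma mat_exp_sum_Diff:
  assumes "x \<in> S" "B \<subseteq> S"
  shows "(\<Sum>y\<in>S - B. mat_exp S Q t x y) = 1 - (\<Sum>y\<in>B. mat_exp S Q t x y)"
  using finite_S assms by (simp add: sum_diff mat_exp_row_sum)

lemma mat_exp_sum_le_1:
  assumes "0 \<le> t" "x \<in> S" "B \<subseteq> S"
  shows "(\<Sum>y\<in>B. mat_exp S Q t x y) \<le> 1"
proof -
  have "0 \<le> (\<Sum>y\<in>S - B. mat_exp S Q t x y)"
    using assms(1,2) by (intro sum_nonneg mat_exp_nonneg)
  then show ?thesis
    unfolding mat_exp_sum_Diff[OF assms(2,3)] by simp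
qed

lemma supersolution_mat_exp_le:
  assumes "A \<in> S" "0 \<le> T"
    and deriv: "\<And>y t. y \<in> S \<Longrightarrow> ((\<lambda>t. g t y) has_real_derivative g' t y) (at t)"
    and super: "\<And>t z. 0 \<le> t \<Longrightarrow> t \<le> T \<Longrightarrow> z \<in> S \<Longrightarrow> g' t z + (\<Sum>y\<in>S. Q z y * g t y) \<le> 0"
  shows "(\<Sum>y\<in>S. mat_exp S Q T A y * g T y) \<le> g 0 A"
proof -
  define F where "F t = (\<Sum>y\<in>S. mat_exp S Q t A y * g t y)" for t
  have "(F has_real_derivative
      (\<Sum>y\<in>S. (\<Sum>z\<in>S. mat_exp S Q t A z * Q z y) * g t y + g' t y * mat_exp S Q t A y)) (at t)"
    for t unfolding F_def
    by (intro DERIV_sum DERIV_mult DERIV_mat_exp[OF finite_S assms(1)] deriv)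
  moreover have "(\<Sum>y\<in>S. (\<Sum>z\<in>S. mat_exp S Q t A z * Q z y) * g t y + g' t y * mat_exp S Q t A y)
      = (\<Sum>z\<in>S. mat_exp S Q t A z * (g' t z + (\<Sum>y\<in>S. Q z y * g t y)))" for t
  proof -
    have "(\<Sum>y\<in>S. (\<Sum>z\<in>S. mat_exp S Q t A z * Q z y) * g t y)
        = (\<Sum>z\<in>S. mat_exp S Q t A z * (\<Sum>y\<in>S. Q z y * g t y))"
      by (simp add: sum_distrib_left sum_distrib_right mult_ac) (rule sum.swap)
    then show ?thesis
      by (simp add: sum.distrib distrib_left mult_ac)
  qed
  moreover have "(\<Sum>z\<in>S. mat_exp S Q t A z * (g' t z + (\<Sum>y\<in>S. Q z y * g t y))) \<le> 0"
    if "0 \<le> t" "t \<le> T" for t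
    using that by (intro sum_nonpos mult_nonneg_nonpos mat_exp_nonneg assms(1) super) auto
  ultimately have "F T \<le> F 0"
    using assms(2) by (intro DERIV_nonpos_imp_nonincreasing[of 0 T F]) auto
  moreover have "F 0 = g 0 A"
    unfolding F_def mat_exp_0 using assms(1) finite_S
    by (simp add: if_distrib[where f="\<lambda>u. u * _"] cong: if_cong)
  ultimately show ?thesis unfolding F_def by simp
qed

lemma mat_exp_sum_le_supersolution:
  assumes "A \<in> S" "0 \<le> T" "B \<subseteq> S"
    and "\<And>y t. y \<in> S \<Longrightarrow> ((\<lambda>t. g t y) has_real_derivative g' t y) (at t)"
    and "\<And>t z. 0 \<le> t \<Longrightarrow> t \<le> T \<Longrightarrow> z \<in> S \<Longrightarrow> g' t z + (\<Sum>y\<in>S. Q z y * g t y) \<le> 0"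
    and "\<And>y. y \<in> S \<Longrightarrow> 0 \<le> g T y" and "\<And>y. y \<in> B \<Longrightarrow> 1 \<le> g T y"
  shows "(\<Sum>y\<in>B. mat_exp S Q T A y) \<le> g 0 A"
proof -
  have P_nonneg: "0 \<le> mat_exp S Q T A y" for y
    using assms(2,1) by (rule mat_exp_nonneg)
  have "(\<Sum>y\<in>B. mat_exp S Q T A y) \<le> (\<Sum>y\<in>B. mat_exp S Q T A y * g T y)"
    by (intro sum_mono) (metis P_nonneg assms(7) mult_le_cancel_left1 not_less)
  also have "\<dots> \<le> (\<Sum>y\<in>S. mat_exp S Q T A y * g T y)"
    using assms(3,6) finite_S P_nonneg by (intro sum_mono2) auto
  also have "\<dots> \<le> g 0 A"
    by (rule supersolution_mat_exp_le) (use assms in auto)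
  finally show ?thesis .
qed

end

section \<open>The contact process on the star\<close>

lemma cp_trans_eq_mat_exp: "cp_trans k lam = mat_exp (cp_states k) (cp_gen k lam)"
proof -
  have "cp_gen_pow k lam n x y = mat_pow (cp_states k) (cp_gen k lam) n x y" for n x y
    by (induction n arbitrary: x) simp_all
  then show ?thesis
    by (simp add: fun_eq_iff cp_trans_def mat_exp_def field_simps)
qed

lemma finite_star_vertices [simp]: "finite (star_vertices k)"
  by (simp add: star_vertices_def)

lemma finite_cp_states [simp]: "finite (cp_states k)"
  by (simp add: cp_states_def)

lemma cp_gen_row_sum:
  assumes "x \<in> cp_states k"
  shows "(\<Sum>y\<in>cp_states k. cp_gen k lam x y) = 0"
proof -
  have "(\<Sum>y\<in>cp_states k. cp_gen k lam x y)
      = cp_gen k lam x x + (\<Sum>y\<in>cp_states k - {x}. cp_gen k lam x y)"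
    using assms by (simp add: sum.remove)
  also have "(\<Sum>y\<in>cp_states k - {x}. cp_gen k lam x y) = (\<Sum>y\<in>cp_states k - {x}. cp_rate k lam x y)"
    by (rule sum.cong) (auto simp: cp_gen_def)
  finally show ?thesis by (simp add: cp_gen_def)
qed

lemma q_matrix_cp_gen:
  assumes "0 \<le> lam"
  shows "q_matrix (cp_states k) (cp_gen k lam)"
proof
  show "0 \<le> cp_gen k lam x y" if "x \<noteq> y" for x y
    using that assms by (simp add: cp_gen_def cp_rate_def)
qed (simp_all add: cp_gen_row_sum)

lemma cp_rate_remove: "v \<in> z \<Longrightarrow> cp_rate k lam z (z - {v}) = 1"
  by (auto simp: cp_rate_def)

lemma cp_rate_insert:
  assumes "v \<in> star_vertices k - z"
  shows "cp_rate k lam z (insert v z) = lam * real (card {u\<in>z. star_adj k u v})"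
proof -
  have "(THE w. insert v z = insert w z \<and> w \<notin> z) = v"
    by (rule the_equality) (use assms in auto)
  then show ?thesis
    using assms by (auto simp: cp_rate_def)
qed

lemma cp_gen_apply:
  assumes z: "z \<in> cp_states k"
  shows "(\<Sum>y\<in>cp_states k. cp_gen k lam z y * f y)
       = (\<Sum>v\<in>z. f (z - {v}) - f z)
         + (\<Sum>v\<in>star_vertices k - z. lam * real (card {u\<in>z. star_adj k u v}) * (f (insert v z) - f z))"
proof -
  define R where "R = (\<lambda>v. z - {v}) ` z"
  define I where "I = (\<lambda>v. insert v z) ` (star_vertices k - z)"
  have zV: "z \<subseteq> star_vertices k"
    using z by (simp add: cp_states_def)
  have RI: "R \<union> I \<subseteq> cp_states k - {z}" "R \<inter> I = {}"
    unfolding R_def I_def using zV by (auto simp: cp_states_def)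
  have "(\<Sum>y\<in>cp_states k. cp_gen k lam z y * f y) = (\<Sum>y\<in>cp_states k - {z}. cp_gen k lam z y * (f y - f z))"
    by (rule sum_mult_eq_sum_increments[OF finite_cp_states z cp_gen_row_sum[OF z]])
  also have "\<dots> = (\<Sum>y\<in>cp_states k - {z}. cp_rate k lam z y * (f y - f z))"
    by (intro sum.cong) (auto simp: cp_gen_def)
  also have "\<dots> = (\<Sum>y\<in>R \<union> I. cp_rate k lam z y * (f y - f z))"
    using RI(1) by (intro sum.mono_neutral_right) (auto simp: R_def I_def cp_rate_def)
  also have "\<dots> = (\<Sum>y\<in>R. cp_rate k lam z y * (f y - f z)) + (\<Sum>y\<in>I. cp_rate k lam z y * (f y - f z))"
    using RI by (intro sum.union_disjoint) (auto intro: finite_subset)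
  also have "(\<Sum>y\<in>R. cp_rate k lam z y * (f y - f z)) = (\<Sum>v\<in>z. f (z - {v}) - f z)"
  proof -
    have "inj_on (\<lambda>v. z - {v}) z" by (rule inj_onI) auto
    then show ?thesis unfolding R_def by (simp add: sum.reindex cp_rate_remove)
  qed
  also have "(\<Sum>y\<in>I. cp_rate k lam z y * (f y - f z))
      = (\<Sum>v\<in>star_vertices k - z. lam * real (card {u\<in>z. star_adj k u v}) * (f (insert v z) - f z))"
  proof -
    have "inj_on (\<lambda>v. insert v z) (star_vertices k - z)" by (rule inj_onI) auto
    then show ?thesis unfolding I_def by (simp add: sum.reindex cp_rate_insert)
  qed
  finally show ?thesis .
qed

lemma star_vertices_eq: "star_vertices k = insert 0 (star_leaves k)"
  by (auto simp: star_vertices_def star_leaves_def)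

lemma zero_notin_star_leaves [simp]: "0 \<notin> star_leaves k"
  by (simp add: star_leaves_def)

lemma finite_star_leaves [simp]: "finite (star_leaves k)"
  by (simp add: star_leaves_def)

lemma card_star_leaves [simp]: "card (star_leaves k) = k"
  by (simp add: star_leaves_def)

lemma star_adj_leaf:
  assumes "v \<in> star_leaves k" "z \<subseteq> star_vertices k"
  shows "{u\<in>z. star_adj k u v} = z \<inter> {0}"
  using assms by (auto simp: star_adj_def star_vertices_eq intro: gr0I)

lemma star_adj_root:
  assumes "z \<subseteq> star_vertices k"
  shows "{u\<in>z. star_adj k u 0} = z \<inter> star_leaves k"
  using assms by (auto simp: star_adj_def star_vertices_eq intro: gr0I)

definition star_lift :: "nat \<Rightarrow> (bool \<Rightarrow> nat \<Rightarrow> real) \<Rightarrow> nat set \<Rightarrow> real" where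
  "star_lift k F y = F (0 \<in> y) (card (y \<inter> star_leaves k))"

text \<open>The contact process on the star lumps to the chain (root infected?, number of infected
  leaves); \<open>star_gen\<close> is its generator.\<close>

definition star_gen :: "nat \<Rightarrow> real \<Rightarrow> (bool \<Rightarrow> nat \<Rightarrow> real) \<Rightarrow> bool \<Rightarrow> nat \<Rightarrow> real" where
  "star_gen k lam F r n =
     (if r then F False n - F True n else lam * real n * (F True n - F False n))
     + real n * (F r (n - 1) - F r n)
     + (if r then lam * real (k - n) * (F True (n + 1) - F True n) else 0)"

lemma star_recovery_sum:
  assumes "z \<subseteq> star_vertices k"
  defines "n \<equiv> card (z \<inter> star_leaves k)"
  shows "(\<Sum>v\<in>z. star_lift k F (z - {v}) - star_lift k F z)
       = (if 0 \<in> z then F False n - F True n else 0) + real n * (F (0 \<in> z) (n - 1) - F (0 \<in> z) n)"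
proof -
  let ?L = "star_leaves k"
  have "finite z"
    using assms(1) by (rule finite_subset) simp
  have "star_lift k F (z - {v}) - star_lift k F z = F (0 \<in> z) (n - 1) - F (0 \<in> z) n"
    if "v \<in> z \<inter> ?L" for v
  proof -
    have "v \<noteq> 0" using that by (metis IntD2 zero_notin_star_leaves)
    moreover have "(z - {v}) \<inter> ?L = (z \<inter> ?L) - {v}" by auto
    ultimately show ?thesis
      using that \<open>finite z\<close> by (simp add: star_lift_def n_def)
  qed
  then have leaves: "(\<Sum>v\<in>z \<inter> ?L. star_lift k F (z - {v}) - star_lift k F z)
      = real n * (F (0 \<in> z) (n - 1) - F (0 \<in> z) n)"
    by (simp add: n_def)
  show ?thesis
  proof (cases "0 \<in> z")
    case True
    have "z - {0} = z \<inter> ?L"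
      using assms(1) by (auto simp: star_vertices_eq)
    then have "star_lift k F (z - {0}) - star_lift k F z = F False n - F True n"
      using True by (simp add: star_lift_def n_def)
    then show ?thesis
      using True leaves \<open>z - {0} = _\<close> by (simp add: sum.remove[OF \<open>finite z\<close> True])
  next
    case False
    then have "z = z \<inter> ?L"
      using assms(1) by (auto simp: star_vertices_eq)
    then show ?thesis
      using False leaves by simp
  qed
qed


lemma star_infection_sum:
  assumes "z \<subseteq> star_vertices k"
  defines "n \<equiv> card (z \<inter> star_leaves k)"
  shows "(\<Sum>v\<in>star_vertices k - z.
            lam * real (card {u\<in>z. star_adj k u v}) * (star_lift k F (insert v z) - star_lift k F z))
       = (if 0 \<in> z then lam * real (k - n) * (F True (n + 1) - F True n)
          else lam * real n * (F True n - F False n))"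
    (is "(\<Sum>v\<in>_. ?T v) = _")
proof -
  let ?L = "star_leaves k"
  have "finite z"
    using assms(1) by (rule finite_subset) simp
  show ?thesis
  proof (cases "0 \<in> z")
    case True
    have "star_vertices k - z = ?L - z"
      using True by (auto simp: star_vertices_eq)
    moreover have "?T v = lam * (F True (n + 1) - F True n)" if v: "v \<in> ?L - z" for v
    proof -
      have "insert v z \<inter> ?L = insert v (z \<inter> ?L)" using v by auto
      then show ?thesis
        using v True \<open>finite z\<close> star_adj_leaf[OF _ assms(1), of v] by (simp add: star_lift_def n_def)
    qed
    ultimately have "(\<Sum>v\<in>star_vertices k - z. ?T v) = (\<Sum>v\<in>?L - z. lam * (F True (n + 1) - F True n))"
      by (rule sum.cong)
    moreover have "?L - z = ?L - (z \<inter> ?L)" by auto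
    ultimately show ?thesis
      using True by (simp add: card_Diff_subset n_def)
  next
    case False
    have "star_vertices k - z = insert 0 (?L - z)"
      using False by (auto simp: star_vertices_eq)
    then have "(\<Sum>v\<in>star_vertices k - z. ?T v) = ?T 0 + (\<Sum>v\<in>?L - z. ?T v)"
      by simp
    moreover have "(\<Sum>v\<in>?L - z. ?T v) = 0"
    proof (intro sum.neutral ballI)
      fix v assume "v \<in> ?L - z"
      show "?T v = 0"
        unfolding star_adj_leaf[OF DiffD1[OF \<open>v \<in> ?L - z\<close>] assms(1)] using False by simp
    qed
    moreover have "?T 0 = lam * real n * (F True n - F False n)"
    proof -
      have "insert 0 z \<inter> ?L = z \<inter> ?L" by auto
      then show ?thesis
        unfolding star_adj_root[OF assms(1)] using False by (simp add: star_lift_def n_def)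
    qed
    ultimately show ?thesis
      using False by (simp only: if_False add_0_right)
  qed
qed

lemma cp_gen_apply_star:
  assumes "z \<in> cp_states k"
  shows "(\<Sum>y\<in>cp_states k. cp_gen k lam z y * star_lift k F y)
       = star_gen k lam F (0 \<in> z) (card (z \<inter> star_leaves k))"
proof -
  have "z \<subseteq> star_vertices k" using assms by (simp add: cp_states_def)
  then show ?thesis
    unfolding cp_gen_apply[OF assms] star_recovery_sum[OF \<open>z \<subseteq> _\<close>]
      star_infection_sum[OF \<open>z \<subseteq> _\<close>] star_gen_def
    by simp
qed

section \<open>A Lyapunov function for the star\<close>

lemma exp_3_le_21: "exp (3::real) \<le> 21"
proof -
  have "exp (3::real) = exp 1 ^ 3" by (simp flip: exp_of_nat_mult)
  also have "\<dots> \<le> (272/100) ^ 3" using e_less_272 by (intro power_mono) auto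
  also have "\<dots> \<le> 21" by (simp add: power3_eq_cube)
  finally show ?thesis .
qed

lemma one_le_three_exp_minus:
  fixes x :: real
  assumes "x \<le> 1"
  shows "1 \<le> 3 * exp (- x)"
proof -
  have "1 / 3 \<le> exp (-1::real)"
    unfolding exp_minus inverse_eq_divide[symmetric] using exp_le by (intro le_imp_inverse_le) auto
  also have "\<dots> \<le> exp (- x)"
    using assms by simp
  finally show ?thesis by simp
qed

lemma half_le_one_minus_exp_minus:
  fixes x :: real
  assumes "0 \<le> x" "x \<le> 1"
  shows "x / 2 \<le> 1 - exp (- x)"
proof -
  have "exp (- x) = 1 / exp x" by (simp add: exp_minus field_simps)
  also have "\<dots> \<le> 1 / (1 + x)" using assms by (intro divide_left_mono) auto
  also have "\<dots> \<le> 1 - x / 2"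
  proof -
    have "0 \<le> x * (1 - x)" using assms by simp
    then show ?thesis using assms by (simp add: field_simps)
  qed
  finally show ?thesis by simp
qed

lemma star_gen_add_scaled:
  "star_gen k lam (\<lambda>r n. F r n + a * G r n) r n = star_gen k lam F r n + a * star_gen k lam G r n"
  unfolding star_gen_def by (simp add: algebra_simps)

locale star_lyapunov =
  fixes k M :: nat and lam :: real
  assumes lam_pos: "0 < lam" and lam_less_1: "lam < 1"
    and M_le: "real M \<le> lam * real k / 100" and lam_M_ge: "128 \<le> lam * real M"
begin

text \<open>The constants satisfy \<open>lam * k * s0 = 2 * (c + 1)\<close>, which pays for the recovery of an
  infected root, and \<open>phi 1 = s 1 * lam * k / 100\<close>, which makes \<open>H 1 r n \<ge> 1\<close> exactly for
  \<open>n \<le> lam * k / 100\<close>.\<close>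

definition c :: real where "c = lam * real M / 16"
definition s0 :: real where "s0 = 2 * (c + 1) / (lam * real k)"
definition s :: "real \<Rightarrow> real" where "s t = s0 * exp (3 * t)"
definition phi1 :: real where "phi1 = s0 * exp 3 * lam * real k / 100"
definition phi :: "real \<Rightarrow> real" where "phi t = phi1 - c * (1 - t)"
definition H :: "real \<Rightarrow> bool \<Rightarrow> nat \<Rightarrow> real" where
  "H t r n = (if r then 1 else 2) * exp (phi t - s t * real n)"
definition G :: "real \<Rightarrow> nat \<Rightarrow> real" where "G t n = exp (- t) * (1 - exp t / 4) ^ n"
definition K :: real where "K = 2 * c * exp (phi1 + 1) * (10 / 3) ^ (M div 8)"
definition V :: "real \<Rightarrow> bool \<Rightarrow> nat \<Rightarrow> real" where "V t r n = H t r n + K * G t n"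

lemma lam_M_le: "lam * real M \<le> real M"
  using lam_pos lam_less_1 by (intro mult_left_le_one_le) auto

lemma M_ge: "128 \<le> real M"
  using lam_M_ge lam_M_le by linarith

lemma lam_k_ge: "100 * real M \<le> lam * real k"
  using M_le by simp

lemma k_pos: "0 < real k"
  using lam_k_ge M_ge by (cases "k = 0") auto

lemma c_pos: "0 < c"
  unfolding c_def using M_ge lam_pos by simp

lemma lam_k_s0: "lam * real k * s0 = 2 * (c + 1)"
  unfolding s0_def using lam_pos k_pos by simp

lemma s0_pos: "0 < s0"
  unfolding s0_def using c_pos lam_pos k_pos by simp

lemma s_bounds:
  assumes "0 \<le> t" "t \<le> 1"
  shows "s0 \<le> s t" "s t \<le> 1/2"
proof -
  show "s0 \<le> s t" unfolding s_def using s0_pos assms by simp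
  have "84 * c + 84 \<le> lam * real k"
    using c_def lam_M_le M_ge lam_k_ge by linarith
  then have "s0 * 21 \<le> 1/2"
    unfolding s0_def using lam_pos k_pos by (simp add: field_simps)
  moreover have "exp (3 * t) \<le> 21"
    by (rule order_trans[OF _ exp_3_le_21]) (use assms in simp)
  ultimately show "s t \<le> 1/2"
    unfolding s_def using s0_pos mult_left_mono[of "exp (3 * t)" 21 s0] by linarith
qed

lemma phi1_le: "100 * phi1 \<le> 42 * c + 42"
proof -
  have "100 * phi1 = 2 * (c + 1) * exp 3"
    unfolding phi1_def using lam_k_s0 by (simp add: mult_ac)
  also have "\<dots> \<le> 2 * (c + 1) * 21"
    using exp_3_le_21 c_pos by (intro mult_left_mono) auto
  finally show ?thesis by simp
qed

lemma H_exponent_le: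
  assumes "0 \<le> t" "t \<le> 1"
  shows "phi t - s t * real n \<le> phi1"
proof -
  have "0 \<le> c * (1 - t)"
    using c_pos assms by simp
  moreover have "0 \<le> s t * real n"
    unfolding s_def using s0_pos by simp
  ultimately show ?thesis
    unfolding phi_def by linarith
qed

lemma H_bounds: "exp (phi t - s t * real n) \<le> H t r n" "H t r n \<le> 2 * exp (phi t - s t * real n)"
  by (cases r; simp add: H_def)+

lemma DERIV_H: "((\<lambda>t. H t r n) has_real_derivative H t r n * (c - 3 * s t * real n)) (at t)"
  unfolding H_def phi_def s_def
  by (auto intro!: derivative_eq_intros simp: algebra_simps)

lemma DERIV_G:
  "((\<lambda>t. G t n) has_real_derivative
      - G t n - exp (- t) * (real n * (1 - exp t / 4) ^ (n - 1) * (exp t / 4))) (at t)"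
  unfolding G_def by (auto intro!: derivative_eq_intros simp: algebra_simps)

lemma H_down: "real n * (H t r (n - 1) - H t r n) = real n * H t r n * (exp (s t) - 1)"
proof (cases "n = 0")
  case False
  then have "phi t - s t * real (n - 1) = (phi t - s t * real n) + s t"
    by (simp add: of_nat_diff algebra_simps)
  then have "H t r (n - 1) = H t r n * exp (s t)"
    unfolding H_def by (simp only: exp_add)
  then show ?thesis by (simp add: algebra_simps)
qed simp

lemma H_up: "H t r (n + 1) = H t r n * exp (- s t)"
proof -
  have "phi t - s t * real (n + 1) = (phi t - s t * real n) + - s t"
    by (simp add: algebra_simps)
  then show ?thesis
    unfolding H_def by (simp only: exp_add)
qed

lemma H_drift_root_infected:
  assumes "0 \<le> t" "t \<le> 1" "n \<le> k"
  shows "H t True n * (c - 3 * s t * real n) + star_gen k lam (H t) True n \<le> 0"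
proof -
  define e where "e = exp (phi t - s t * real n)"
  have H_eq: "H t True n = e" "H t False n = 2 * e"
    unfolding H_def e_def by simp_all
  have s: "s0 \<le> s t" "s t \<le> 1/2" and "0 \<le> s t"
    using s_bounds[OF assms(1,2)] s0_pos by auto
  have "H t True n * (c - 3 * s t * real n) + star_gen k lam (H t) True n
      = e * (c + 1 - 3 * s t * real n + real n * (exp (s t) - 1)
             - lam * (real k - real n) * (1 - exp (- s t)))"
    unfolding star_gen_def H_down H_up unfolding H_eq
    using assms(3) by (simp add: of_nat_diff algebra_simps)
  also have "\<dots> \<le> 0"
  proof -
    have "real n * (exp (s t) - 1) \<le> real n * (2 * s t)"
      using real_exp_bound_lemma[OF \<open>0 \<le> s t\<close> s(2)] by (intro mult_left_mono) auto
    moreover have "real n * (lam * (1 - exp (- s t))) \<le> real n * s t"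
    proof (rule mult_left_mono)
      have "lam * (1 - exp (- s t)) \<le> 1 - exp (- s t)"
        using lam_pos lam_less_1 \<open>0 \<le> s t\<close> by (intro mult_left_le_one_le) auto
      then show "lam * (1 - exp (- s t)) \<le> s t"
        using exp_ge_add_one_self[of "- s t"] by linarith
    qed simp
    moreover have "lam * real k * (s t / 2) \<le> lam * real k * (1 - exp (- s t))"
      using half_le_one_minus_exp_minus[of "s t"] s \<open>0 \<le> s t\<close> lam_pos k_pos
      by (intro mult_left_mono) auto
    moreover have "lam * real k * s0 \<le> lam * real k * s t"
      using s lam_pos k_pos by (intro mult_left_mono) auto
    ultimately have "c + 1 - 3 * s t * real n + real n * (exp (s t) - 1)
        - lam * (real k - real n) * (1 - exp (- s t)) \<le> 0"
      using lam_k_s0 by (simp add: algebra_simps)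
    then show ?thesis
      unfolding e_def by (simp add: mult_nonneg_nonpos)
  qed
  finally show ?thesis .
qed

text \<open>With a healthy root, leaves are not reinfected and the bound can fail for few infected
  leaves; this is the defect that \<open>K * G\<close> compensates.\<close>

lemma H_drift_root_healthy:
  assumes "0 \<le> t" "t \<le> 1"
  shows "H t False n * (c - 3 * s t * real n) + star_gen k lam (H t) False n
       \<le> (if 8 * n < M then 2 * c * exp phi1 else 0)"
proof -
  define e where "e = exp (phi t - s t * real n)"
  have H_eq: "H t True n = e" "H t False n = 2 * e"
    unfolding H_def e_def by simp_all
  have "0 \<le> s t" "s t \<le> 1/2"
    using s_bounds[OF assms] s0_pos by auto
  have "H t False n * (c - 3 * s t * real n) + star_gen k lam (H t) False n
      = 2 * e * (c - 3 * s t * real n + real n * (exp (s t) - 1) - lam * real n / 2)"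
    unfolding star_gen_def H_down unfolding H_eq by (simp add: algebra_simps)
  also have "\<dots> \<le> 2 * e * (c - lam * real n / 2)"
  proof -
    have "exp (s t) - 1 \<le> 3 * s t"
      using real_exp_bound_lemma[OF \<open>0 \<le> s t\<close> \<open>s t \<le> 1/2\<close>] \<open>0 \<le> s t\<close> by linarith
    then have "(exp (s t) - 1) * real n \<le> 3 * s t * real n"
      by (rule mult_right_mono) simp
    then show ?thesis
      unfolding e_def by (intro mult_left_mono) (auto simp: mult.commute)
  qed
  also have "\<dots> \<le> (if 8 * n < M then 2 * c * exp phi1 else 0)"
  proof (cases "8 * n < M")
    case True
    have "e \<le> exp phi1"
      unfolding e_def using H_exponent_le[OF assms] by simp
    have "2 * e * (c - lam * real n / 2) \<le> 2 * e * c"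
      using lam_pos unfolding e_def by (intro mult_left_mono) auto
    also have "\<dots> \<le> 2 * exp phi1 * c"
      using \<open>e \<le> exp phi1\<close> c_pos by (intro mult_right_mono) auto
    finally show ?thesis using True by (simp add: mult_ac)
  next
    case False
    then have "c \<le> lam * real n / 2"
      unfolding c_def using lam_pos mult_left_mono[of "real M" "8 * real n" lam] by simp
    then show ?thesis
      using False unfolding e_def by (simp add: mult_nonneg_nonpos)
  qed
  finally show ?thesis .
qed

lemma G_base_bounds:
  fixes t :: real
  assumes "0 \<le> t" "t \<le> 1"
  shows "3/10 \<le> 1 - exp t / 4" "1 - exp t / 4 \<le> 1"
proof -
  have "exp t \<le> exp 1" using assms by simp
  then show "3/10 \<le> 1 - exp t / 4" using e_less_272 by linarith
qed simp

lemma G_nonneg: "0 \<le> t \<Longrightarrow> t \<le> 1 \<Longrightarrow> 0 \<le> G t n"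
  unfolding G_def using G_base_bounds[of t] by simp

lemma G_drift:
  assumes "0 \<le> t" "t \<le> 1"
  shows "- G t n - exp (- t) * (real n * (1 - exp t / 4) ^ (n - 1) * (exp t / 4))
           + star_gen k lam (\<lambda>_. G t) r n \<le> - G t n"
proof -
  have "real n * (G t (n - 1) - G t n) = exp (- t) * (real n * (1 - exp t / 4) ^ (n - 1) * (exp t / 4))"
  proof (cases n)
    case (Suc m)
    then have "G t (n - 1) - G t n = exp (- t) * ((1 - exp t / 4) ^ m * (exp t / 4))"
      unfolding G_def by (simp add: algebra_simps)
    then show ?thesis unfolding Suc by simp
  qed simp
  moreover have "star_gen k lam (\<lambda>_. G t) r n \<le> real n * (G t (n - 1) - G t n)"
  proof -
    have "G t (n + 1) \<le> G t n"
      unfolding G_def using G_base_bounds[OF assms] by (simp add: mult_left_le_one_le mult_left_mono)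
    then have "lam * real (k - n) * (G t (n + 1) - G t n) \<le> 0"
      using lam_pos by (simp add: mult_nonneg_nonpos)
    then show ?thesis
      unfolding star_gen_def by (cases r) simp_all
  qed
  ultimately show ?thesis by linarith
qed

lemma K_nonneg: "0 \<le> K"
  unfolding K_def using c_pos by simp

lemma K_G_ge:
  assumes "0 \<le> t" "t \<le> 1" "8 * n < M"
  shows "2 * c * exp phi1 \<le> K * G t n"
proof -
  have "(3/10::real) ^ (M div 8) \<le> (3/10) ^ n"
    using assms(3) by (intro power_decreasing) auto
  also have "\<dots> \<le> (1 - exp t / 4) ^ n"
    using G_base_bounds[OF assms(1,2)] by (intro power_mono) auto
  finally have "exp (-1) * (3/10::real) ^ (M div 8) \<le> G t n"
    unfolding G_def using assms(2) by (intro mult_mono) auto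
  then have "K * (exp (-1) * (3/10) ^ (M div 8)) \<le> K * G t n"
    using K_nonneg by (rule mult_left_mono)
  moreover have "K * (exp (-1) * (3/10) ^ (M div 8)) = 2 * c * exp phi1"
  proof -
    have "(10/3::real) ^ (M div 8) * (3/10) ^ (M div 8) = 1"
      by (simp flip: power_mult_distrib)
    moreover have "exp (phi1 + 1) * exp (-1) = exp phi1"
      by (simp flip: exp_add)
    ultimately show ?thesis
      unfolding K_def by (simp add: algebra_simps)
  qed
  ultimately show ?thesis by simp
qed

definition dV :: "real \<Rightarrow> bool \<Rightarrow> nat \<Rightarrow> real" where
  "dV t r n = H t r n * (c - 3 * s t * real n)
    + K * (- G t n - exp (- t) * (real n * (1 - exp t / 4) ^ (n - 1) * (exp t / 4)))"

lemma DERIV_V: "((\<lambda>t. V t r n) has_real_derivative dV t r n) (at t)"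
  unfolding V_def dV_def by (intro DERIV_add DERIV_H DERIV_cmult DERIV_G)

lemma V_supersolution:
  assumes "0 \<le> t" "t \<le> 1" "z \<in> cp_states k"
  shows "star_lift k (dV t) z + (\<Sum>y\<in>cp_states k. cp_gen k lam z y * star_lift k (V t) y) \<le> 0"
proof -
  define r where "r = (0 \<in> z)"
  define n where "n = card (z \<inter> star_leaves k)"
  have "n \<le> k"
    unfolding n_def using card_mono[of "star_leaves k" "z \<inter> star_leaves k"] by auto
  have "H t r n * (c - 3 * s t * real n) + star_gen k lam (H t) r n
      \<le> (if \<not> r \<and> 8 * n < M then 2 * c * exp phi1 else 0)"
    using H_drift_root_infected[OF assms(1,2) \<open>n \<le> k\<close>] H_drift_root_healthy[OF assms(1,2)]
    by (cases r) auto
  also have "\<dots> \<le> K * G t n"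
    using K_G_ge[OF assms(1,2)] K_nonneg G_nonneg[OF assms(1,2)] by auto
  finally have "dV t r n + star_gen k lam (V t) r n \<le> 0"
    using mult_left_mono[OF G_drift[OF assms(1,2), of n r] K_nonneg]
    unfolding dV_def V_def[abs_def] star_gen_add_scaled by (simp add: algebra_simps)
  then show ?thesis
    unfolding cp_gen_apply_star[OF assms(3)] unfolding star_lift_def r_def n_def .
qed

lemma V_nonneg: "0 \<le> t \<Longrightarrow> t \<le> 1 \<Longrightarrow> 0 \<le> V t r n"
  unfolding V_def H_def using K_nonneg G_nonneg[of t n] by simp

lemma V_final_ge_1:
  assumes "real n < lam * real k / 100"
  shows "1 \<le> V 1 r n"
proof -
  have "0 \<le> s0 * exp 3 * (lam * real k / 100 - real n)"
    using assms s0_pos by simp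
  also have "\<dots> = phi 1 - s 1 * real n"
    unfolding phi_def s_def phi1_def by (simp add: algebra_simps)
  finally have "1 \<le> exp (phi 1 - s 1 * real n)"
    by simp
  then have "1 \<le> H 1 r n"
    using H_bounds(1)[of 1 n r] by linarith
  then show ?thesis
    unfolding V_def using mult_nonneg_nonneg[OF K_nonneg G_nonneg[of 1 n]] by linarith
qed

lemma H_initial_le:
  assumes "M \<le> n"
  shows "H 0 r n \<le> exp (- lam * real M / 128)"
proof -
  have "exp (phi 0 - s 0 * real n) \<le> exp (phi 0)"
    unfolding s_def using s0_pos by simp
  then have "H 0 r n \<le> 2 * exp (phi 0)"
    using H_bounds(2)[of 0 r n] by linarith
  also have "\<dots> \<le> exp 1 * exp (phi 0)"
    using exp_ge_add_one_self[of 1] by (intro mult_right_mono) auto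
  also have "\<dots> = exp (phi1 - c + 1)"
    unfolding phi_def by (simp flip: exp_add)
  also have "\<dots> \<le> exp (- lam * real M / 128)"
    using phi1_le lam_M_ge unfolding c_def by simp
  finally show ?thesis .
qed

lemma K_G_initial_le:
  assumes "M \<le> n"
  shows "K * G 0 n \<le> 2 * exp (- lam * real M / 128)"
proof -
  define q where "q = M div 8"
  have "real M \<le> 8 * real q + 7"
    unfolding q_def by linarith
  have "G 0 n \<le> ((3/4::real) ^ 8) ^ q"
    unfolding G_def q_def power_mult[symmetric] using assms by (simp add: power_decreasing)
  then have "K * G 0 n \<le> K * ((3/4) ^ 8) ^ q"
    using K_nonneg by (rule mult_left_mono)
  also have "\<dots> = 2 * c * exp (phi1 + 1) * ((10/3) * (3/4) ^ 8) ^ q"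
    unfolding K_def q_def by (simp only: power_mult_distrib mult_ac)
  also have "\<dots> \<le> 2 * c * exp (phi1 + 1) * exp (-1) ^ q"
  proof -
    have "(10/3::real) * (3/4) ^ 8 \<le> inverse (272/100)"
      by (simp add: power_divide)
    also have "\<dots> \<le> inverse (exp 1)"
      using e_less_272 by (intro le_imp_inverse_le) auto
    finally have "(10/3::real) * (3/4) ^ 8 \<le> exp (-1)"
      by (simp add: exp_minus)
    then show ?thesis
      using c_pos by (intro mult_left_mono power_mono) auto
  qed
  also have "\<dots> = 2 * (c * exp (phi1 + 1 - real q))"
    by (simp add: exp_of_nat_mult[symmetric] exp_diff exp_minus field_simps)
  also have "\<dots> \<le> 2 * exp (- lam * real M / 128)"
  proof -
    define X where "X = phi1 + 1 - real q + lam * real M / 128"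
    have "c \<le> 1 - X"
      unfolding X_def using phi1_le c_def \<open>real M \<le> 8 * real q + 7\<close> lam_M_le M_ge by linarith
    also have "\<dots> \<le> exp (- X)"
      using exp_ge_add_one_self[of "- X"] by simp
    finally have "c * exp (phi1 + 1 - real q) \<le> exp (- X) * exp (phi1 + 1 - real q)"
      by (intro mult_right_mono) auto
    also have "\<dots> = exp (- lam * real M / 128)"
      unfolding X_def by (simp flip: exp_add)
    finally show ?thesis by simp
  qed
  finally show ?thesis .
qed

lemma few_leaves_prob_le:
  assumes "A \<in> cp_states k" "M \<le> card (A \<inter> star_leaves k)"
  shows "(\<Sum>y\<in>{y\<in>cp_states k. real (card (y \<inter> star_leaves k)) < lam * real k / 100}.
            cp_trans k lam 1 A y) \<le> 3 * exp (- lam * real M / 128)"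
proof -
  interpret q_matrix "cp_states k" "cp_gen k lam"
    using lam_pos by (intro q_matrix_cp_gen) simp
  have "(\<Sum>y\<in>{y\<in>cp_states k. real (card (y \<inter> star_leaves k)) < lam * real k / 100}.
            cp_trans k lam 1 A y) \<le> star_lift k (V 0) A"
    unfolding cp_trans_eq_mat_exp
  proof (rule mat_exp_sum_le_supersolution[where g'="\<lambda>t. star_lift k (dV t)"])
    show "((\<lambda>t. star_lift k (V t) y) has_real_derivative star_lift k (dV t) y) (at t)" for y t
      unfolding star_lift_def by (rule DERIV_V)
  qed (use assms V_supersolution V_nonneg V_final_ge_1 in \<open>auto simp: star_lift_def\<close>)
  also have "\<dots> \<le> 3 * exp (- lam * real M / 128)"
    using add_mono[OF H_initial_le[OF assms(2)] K_G_initial_le[OF assms(2)]]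
    unfolding star_lift_def V_def by simp
  finally show ?thesis .
qed

end

theorem lemma3p3:
  fixes k M :: nat and lam :: real and A :: "nat set"
  assumes "0 < lam" and "lam < 1"
    and "M \<ge> 1"
    and "32 / lam \<le> real M" and "real M \<le> lam * real k / 100"
    and "A \<in> cp_states k"
    and "card (A \<inter> star_leaves k) \<ge> M"
  shows "(\<Sum>y\<in>{y\<in>cp_states k. real (card (y \<inter> star_leaves k)) \<ge> lam * real k / 100}.
            cp_trans k lam 1 A y) \<ge> 1 - 3 * exp (- lam * real M / 128)"
proof -
  interpret q_matrix "cp_states k" "cp_gen k lam"
    using assms(1) by (intro q_matrix_cp_gen) simp
  let ?bad = "{y\<in>cp_states k. real (card (y \<inter> star_leaves k)) < lam * real k / 100}"
  have "(\<Sum>y\<in>?bad. cp_trans k lam 1 A y) \<le> 3 * exp (- lam * real M / 128)"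
  proof (cases "128 \<le> lam * real M")
    case True
    interpret star_lyapunov k M lam
      by unfold_locales (fact assms True)+
    show ?thesis
      using few_leaves_prob_le assms(6,7) .
  next
    case False
    \<comment> \<open>Then the bound is trivial.\<close>
    then have "1 \<le> 3 * exp (- lam * real M / 128)"
      using one_le_three_exp_minus[of "lam * real M / 128"] by simp
    then show ?thesis
      using mat_exp_sum_le_1[OF _ assms(6), of 1 ?bad] unfolding cp_trans_eq_mat_exp by auto
  qed
  moreover have "{y\<in>cp_states k. real (card (y \<inter> star_leaves k)) \<ge> lam * real k / 100}
      = cp_states k - ?bad"
    by auto
  ultimately show ?thesis
    using mat_exp_sum_Diff[OF assms(6), of ?bad 1] unfolding cp_trans_eq_mat_exp by auto
qed

end
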